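(* Let $d\ge2$ be even, $\epsilon>0$ and $B>0$. Then the mechanism $\mathcal{M}_{\alpha_0,B}$ with $\alpha_0=\frac{e^\epsilon}{e^\epsilon+1}$ does not satisfy $\epsilon$-local differential privacy on the input domain $[-1,1]^d$.
   Context: For $B>0$ and $v\in\{-1,1\}^d$ let $T^+(v)=\{y\in\{-B,B\}^d: y\cdot v>0\}$, $T^-(v)=\{y\in\{-B,B\}^d: y\cdot v\le 0\}$. For $\alpha\in[0,1]$, $\mathcal{M}_{\alpha,B}$ takes $x\in[-1,1]^d$, samples $V\in\{-1,1\}^d$ with independent coordinates $\mathbb{P}[V_j=\pm1]=\frac12\pm\frac12x_j$, independently samples $u\in\{0,1\}$ with $\mathbb{P}[u=1]=\alpha$, and outputs a uniformly random element of $T^+(V)$ if $u=1$ and of $T^-(V)$ if $u=0$. A mechanism $\mathcal{M}$ satisfies $\epsilon$-local differential privacy if for all inputs $x,x'$ and all sets $\mathcal{Y}$ of outputs, $\mathbb{P}[\mathcal{M}(x)\in\mathcal{Y}]\le e^\epsilon\mathbb{P}[\mathcal{M}(x')\in\mathcal{Y}]$. *)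

theory Defs
  imports "HOL-Analysis.Analysis"
begin

text \<open>Vectors in R^d are represented as real lists of length d.\<close>

definition sign_cube :: "nat \<Rightarrow> real list set" where
  "sign_cube d = {v. length v = d \<and> set v \<subseteq> {-1, 1}}"

definition out_cube :: "nat \<Rightarrow> real \<Rightarrow> real list set" where
  "out_cube d B = {y. length y = d \<and> set y \<subseteq> {-B, B}}"

definition in_domain :: "nat \<Rightarrow> real list set" where
  "in_domain d = {x. length x = d \<and> set x \<subseteq> {-1..1}}"

definition dotl :: "real list \<Rightarrow> real list \<Rightarrow> real" where
  "dotl y v = sum_list (map2 (*) y v)"

definition T_plus :: "real \<Rightarrow> real list \<Rightarrow> real list set" where
  "T_plus B v = {y \<in> out_cube (length v) B. dotl y v > 0}"

definition T_minus :: "real \<Rightarrow> real list \<Rightarrow> real list set" where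
  "T_minus B v = {y \<in> out_cube (length v) B. dotl y v \<le> 0}"

text \<open>Probability that V = v, where V_j are independent with P[V_j = \<plusminus>1] = 1/2 \<plusminus> x_j/2.\<close>
definition probV :: "real list \<Rightarrow> real list \<Rightarrow> real" where
  "probV x v = (\<Prod>j<length x. (1 + x ! j * v ! j) / 2)"

definition mech_prob :: "real \<Rightarrow> real \<Rightarrow> real list \<Rightarrow> real list \<Rightarrow> real" where
  "mech_prob \<alpha> B x y =
     (\<Sum>v\<in>sign_cube (length x). probV x v *
        (\<alpha> * (if y \<in> T_plus B v then 1 / real (card (T_plus B v)) else 0)
         + (1 - \<alpha>) * (if y \<in> T_minus B v then 1 / real (card (T_minus B v)) else 0)))"

text \<open>Probability that M_{alpha,B}(x) lands in an arbitrary set of outputs Y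
  (outputs outside the finite output cube have probability zero).\<close>
definition mech_set_prob :: "real \<Rightarrow> real \<Rightarrow> real list \<Rightarrow> real list set \<Rightarrow> real" where
  "mech_set_prob \<alpha> B x Y = (\<Sum>y\<in>Y \<inter> out_cube (length x) B. mech_prob \<alpha> B x y)"

definition eps_LDP :: "nat \<Rightarrow> real \<Rightarrow> real \<Rightarrow> real \<Rightarrow> bool" where
  "eps_LDP d \<epsilon> \<alpha> B \<longleftrightarrow>
     (\<forall>x\<in>in_domain d. \<forall>x'\<in>in_domain d. \<forall>Y.
        mech_set_prob \<alpha> B x Y \<le> exp \<epsilon> * mech_set_prob \<alpha> B x' Y)"

end

theory Submission
  imports Defs
begin

text \<open>On a vertex x of the cube the sign vector V equals x almost surely, so the mechanism is
  explicit there. Take x = (1,...,1), x' = (-1,...,-1) and the output y = (B,...,B). Then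
  P[M(x) = y] = alpha / |T+(x)| and P[M(x') = y] = (1 - alpha) / |T-(x')|, where
  alpha = e^eps (1 - alpha). Both sets are described by the sign of the coordinate sum, and
  T+(x) is strictly contained in T-(x'), since for even d a balanced output has coordinate
  sum 0. Hence the privacy ratio at y exceeds e^eps.\<close>

lemma finite_sign_cube: "finite (sign_cube d)"
proof -
  have "sign_cube d = {xs. set xs \<subseteq> {-1, 1} \<and> length xs = d}"
    unfolding sign_cube_def by auto
  then show ?thesis using finite_lists_length_eq[of "{-1, 1 :: real}" d] by simp
qed

lemma finite_out_cube: "finite (out_cube d B)"
proof -
  have "out_cube d B = {xs. set xs \<subseteq> {-B, B} \<and> length xs = d}"
    unfolding out_cube_def by auto
  then show ?thesis using finite_lists_length_eq[of "{-B, B}" d] by simp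
qed

lemma probV_vertex:
  assumes x: "x \<in> sign_cube d" and v: "v \<in> sign_cube d"
  shows "probV x v = (if v = x then 1 else 0)"
proof -
  have len: "length v = length x" using x v unfolding sign_cube_def by simp
  have "set x \<subseteq> {-1, 1}" "set v \<subseteq> {-1, 1}" using x v unfolding sign_cube_def by auto
  then have coord: "x ! j \<in> {-1, 1}" "v ! j \<in> {-1, 1}" if "j < length x" for j
    using that len by (metis nth_mem subsetD)+
  show ?thesis
  proof (cases "v = x")
    case True
    then have "(1 + x ! j * v ! j) / 2 = 1" if "j < length x" for j
      using coord[OF that] by auto
    with True show ?thesis unfolding probV_def by simp
  next
    case False
    then obtain j where j: "j < length x" "v ! j \<noteq> x ! j"
      using len by (auto simp: list_eq_iff_nth_eq)
    then have "(1 + x ! j * v ! j) / 2 = 0" using coord[OF j(1)] by auto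
    then have "probV x v = 0" unfolding probV_def by (intro prod_zero) (use j(1) in auto)
    with False show ?thesis by simp
  qed
qed

lemma mech_prob_vertex:
  assumes "x \<in> sign_cube (length x)"
  shows "mech_prob \<alpha> B x y =
     \<alpha> * (if y \<in> T_plus B x then 1 / real (card (T_plus B x)) else 0)
     + (1 - \<alpha>) * (if y \<in> T_minus B x then 1 / real (card (T_minus B x)) else 0)"
proof -
  let ?f = "\<lambda>v. \<alpha> * (if y \<in> T_plus B v then 1 / real (card (T_plus B v)) else 0)
     + (1 - \<alpha>) * (if y \<in> T_minus B v then 1 / real (card (T_minus B v)) else 0)"
  have "mech_prob \<alpha> B x y = (\<Sum>v\<in>sign_cube (length x). if v = x then ?f v else 0)"
    unfolding mech_prob_def by (rule sum.cong) (simp_all add: probV_vertex[OF assms])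
  then show ?thesis by (simp add: sum.delta[OF finite_sign_cube] assms)
qed

lemma replicate_in_sign_cube: "c \<in> {-1, 1} \<Longrightarrow> replicate d c \<in> sign_cube d"
  unfolding sign_cube_def by auto

lemma dotl_replicate: "length y = n \<Longrightarrow> dotl y (replicate n c) = c * sum_list y"
  unfolding dotl_def by (induction y arbitrary: n) (auto simp: algebra_simps)

lemma T_plus_ones: "T_plus B (replicate d 1) = {z \<in> out_cube d B. sum_list z > 0}"
  unfolding T_plus_def out_cube_def by (auto simp: dotl_replicate)

lemma T_minus_minus_ones: "T_minus B (replicate d (-1)) = {z \<in> out_cube d B. sum_list z \<ge> 0}"
  unfolding T_minus_def out_cube_def by (auto simp: dotl_replicate)

lemma T_minus_ones: "T_minus B (replicate d 1) = {z \<in> out_cube d B. sum_list z \<le> 0}"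
  unfolding T_minus_def out_cube_def by (auto simp: dotl_replicate)

lemma T_plus_minus_ones: "T_plus B (replicate d (-1)) = {z \<in> out_cube d B. sum_list z < 0}"
  unfolding T_plus_def out_cube_def by (auto simp: dotl_replicate)

lemma card_T_plus_ones_less:
  assumes "even d"
  shows "card (T_plus B (replicate d 1)) < card (T_minus B (replicate d (-1)))"
proof (rule psubset_card_mono)
  define z where "z = replicate (d div 2) B @ replicate (d div 2) (-B)"
  have "z \<in> out_cube d B" "sum_list z = 0"
    unfolding z_def out_cube_def using assms by (auto simp: sum_list_replicate)
  then show "T_plus B (replicate d 1) \<subset> T_minus B (replicate d (-1))"
    unfolding T_plus_ones T_minus_minus_ones by (force simp: psubset_eq)
  show "finite (T_minus B (replicate d (-1)))"
    unfolding T_minus_minus_ones using finite_out_cube by simp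
qed

lemma sum_list_replicate_pos: "d > 0 \<Longrightarrow> B > 0 \<Longrightarrow> sum_list (replicate d B) > (0 :: real)"
  by (simp add: sum_list_replicate)

lemma top_in_T_plus_ones:
  assumes "d > 0" "B > 0"
  shows "replicate d B \<in> T_plus B (replicate d 1)"
  using sum_list_replicate_pos[OF assms] unfolding T_plus_ones out_cube_def by auto

lemma card_T_plus_ones_pos:
  assumes "d > 0" "B > 0"
  shows "card (T_plus B (replicate d 1)) > 0"
  using top_in_T_plus_ones[OF assms] finite_out_cube
  by (auto simp: card_gt_0_iff T_plus_ones)

lemma mech_prob_ones_top:
  assumes "d > 0" "B > 0"
  shows "mech_prob \<alpha> B (replicate d 1) (replicate d B)
           = \<alpha> / real (card (T_plus B (replicate d 1)))"
proof -
  have "replicate d B \<notin> T_minus B (replicate d 1)"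
    using sum_list_replicate_pos[OF assms] unfolding T_minus_ones by auto
  then show ?thesis
    using top_in_T_plus_ones[OF assms] by (simp add: mech_prob_vertex replicate_in_sign_cube)
qed

lemma mech_prob_minus_ones_top:
  assumes "d > 0" "B > 0"
  shows "mech_prob \<alpha> B (replicate d (-1)) (replicate d B)
           = (1 - \<alpha>) / real (card (T_minus B (replicate d (-1))))"
proof -
  have "replicate d B \<notin> T_plus B (replicate d (-1))"
       "replicate d B \<in> T_minus B (replicate d (-1))"
    using sum_list_replicate_pos[OF assms]
    unfolding T_plus_minus_ones T_minus_minus_ones out_cube_def by auto
  then show ?thesis by (simp add: mech_prob_vertex replicate_in_sign_cube)
qed

lemma mech_set_prob_singleton:
  "y \<in> out_cube (length x) B \<Longrightarrow> mech_set_prob \<alpha> B x {y} = mech_prob \<alpha> B x y"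
  unfolding mech_set_prob_def by simp

lemma exp_mult_one_minus_logistic: "exp (t :: real) * (1 - exp t / (exp t + 1)) = exp t / (exp t + 1)"
proof -
  have "exp t + 1 > 0" by (simp add: add_pos_pos)
  then show ?thesis by (simp add: field_simps)
qed

theorem mainTheorem15:
  fixes d :: nat and \<epsilon> B :: real
  assumes "d \<ge> 2" and "even d" and "\<epsilon> > 0" and "B > 0"
  shows "\<not> eps_LDP d \<epsilon> (exp \<epsilon> / (exp \<epsilon> + 1)) B"
proof
  define \<alpha> where "\<alpha> = exp \<epsilon> / (exp \<epsilon> + 1)"
  define p where "p = real (card (T_plus B (replicate d 1)))"
  define m where "m = real (card (T_minus B (replicate d (-1))))"
  let ?y = "replicate d B"
  assume "eps_LDP d \<epsilon> \<alpha> B"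
  moreover have "replicate d 1 \<in> in_domain d" "replicate d (-1) \<in> in_domain d"
    unfolding in_domain_def by auto
  ultimately have "mech_set_prob \<alpha> B (replicate d 1) {?y}
                     \<le> exp \<epsilon> * mech_set_prob \<alpha> B (replicate d (-1)) {?y}"
    unfolding eps_LDP_def by blast
  moreover have "?y \<in> out_cube d B" unfolding out_cube_def by auto
  ultimately have "\<alpha> / p \<le> exp \<epsilon> * ((1 - \<alpha>) / m)"
    using assms by (simp add: mech_set_prob_singleton mech_prob_ones_top
                              mech_prob_minus_ones_top p_def m_def)
  also have "\<dots> = \<alpha> / m"
    using exp_mult_one_minus_logistic[of \<epsilon>] unfolding \<alpha>_def by simp
  finally have "\<alpha> / p \<le> \<alpha> / m" .
  moreover have "\<alpha> / m < \<alpha> / p"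
  proof (rule divide_strict_left_mono)
    have "0 < p" using card_T_plus_ones_pos assms by (simp add: p_def)
    moreover show "p < m" using card_T_plus_ones_less[OF assms(2)] by (simp add: p_def m_def)
    ultimately show "0 < m * p" by simp
    show "\<alpha> > 0" unfolding \<alpha>_def by (simp add: add_pos_pos)
  qed
  ultimately show False by simp
qed

end
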